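(* Let $n\ge6$ and let $\mathfrak g$ be an $n$-dimensional filiform Lie algebra with associated triple $(n-2,n-2,n)$. Then $$\mathrm{HP}_{\mathfrak g}(t,s)=\mathrm{HP}^{(0)}_{\mathfrak g}(t,s)+t^2s^3+t^3s^2+t^2s^2.$$
   Context: All Lie algebras are over $\mathbb C$; $C^1\mathfrak g=\mathfrak g$, $C^k\mathfrak g=[C^{k-1}\mathfrak g,\mathfrak g]$. A Lie algebra is filiform if $\dim\mathfrak g=n\ge2$ and $\dim C^k\mathfrak g=n-k$ for $2\le k\le n$. An adapted basis of a filiform $\mathfrak g$ is a basis $\{e_1,\dots,e_n\}$ with $[e_1,e_h]=e_{h-1}$ ($3\le h\le n$), $[e_2,e_h]=0$ ($1\le h\le n$), $[e_3,e_h]=0$ ($2\le h\le n$). For non-model filiform $\mathfrak g$, $z_1=\min\{k\ge4:[e_k,e_n]\ne0\}$, $z_2=\min\{k\ge4:[e_k,e_{k+1}]\ne0\}$ (in any adapted basis) are isomorphism invariants; $(z_1,z_2,n)$ is the associated triple. The Hilbert polynomial is $\mathrm{HP}_{\mathfrak g}(t,s)=\sum_{k,\ell\ge1}\dim[C^k\mathfrak g,C^\ell\mathfrak g]\,t^ks^\ell$, and for filiform $\mathfrak g$ of dimension $n$, $\mathrm{HP}^{(0)}_{\mathfrak g}(t,s)=(n-2)ts+\sum_{2\le k\le n-2}(n-k-1)(t^ks+ts^k)$ (the part of $\mathrm{HP}_{\mathfrak g}$ with $k=1$ or $\ell=1$). *)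

theory Defs
  imports "HOL-Analysis.Analysis"
begin

text \<open>An n-dimensional complex Lie algebra is modelled as the complex vector space
  complex^'n (with n = CARD('n)) together with a bracket B.\<close>

type_synonym 'n lie_bracket = "complex^'n \<Rightarrow> complex^'n \<Rightarrow> complex^'n"

definition lie_algebra :: "'n::finite lie_bracket \<Rightarrow> bool" where
  "lie_algebra B \<longleftrightarrow>
     (\<forall>x y z. B (x + y) z = B x z + B y z) \<and>
     (\<forall>x y z. B x (y + z) = B x y + B x z) \<and>
     (\<forall>c x y. B (c *s x) y = c *s B x y) \<and>
     (\<forall>c x y. B x (c *s y) = c *s B x y) \<and>
     (\<forall>x. B x x = 0) \<and>
     (\<forall>x y z. B x (B y z) + B y (B z x) + B z (B x y) = 0)"

definition lie_bracket_sub :: "'n::finite lie_bracket \<Rightarrow> (complex^'n) set \<Rightarrow> (complex^'n) set \<Rightarrow> (complex^'n) set" where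
  "lie_bracket_sub B U V = vec.span {B u v | u v. u \<in> U \<and> v \<in> V}"

text \<open>Lower central series: C^1 g = g, C^k g = [C^(k-1) g, g] (index 0 unused).\<close>
fun lcs :: "'n::finite lie_bracket \<Rightarrow> nat \<Rightarrow> (complex^'n) set" where
  "lcs B 0 = UNIV"
| "lcs B (Suc 0) = UNIV"
| "lcs B (Suc (Suc k)) = lie_bracket_sub B (lcs B (Suc k)) UNIV"

definition filiform :: "'n::finite lie_bracket \<Rightarrow> bool" where
  "filiform B \<longleftrightarrow> lie_algebra B \<and> CARD('n) \<ge> 2 \<and>
     (\<forall>k. 2 \<le> k \<and> k \<le> CARD('n) \<longrightarrow> vec.dim (lcs B k) = CARD('n) - k)"

definition adapted_basis :: "'n::finite lie_bracket \<Rightarrow> (nat \<Rightarrow> complex^'n) \<Rightarrow> bool" where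
  "adapted_basis B e \<longleftrightarrow>
     inj_on e {1..CARD('n)} \<and> vec.independent (e ` {1..CARD('n)}) \<and>
     vec.span (e ` {1..CARD('n)}) = UNIV \<and>
     (\<forall>h. 3 \<le> h \<and> h \<le> CARD('n) \<longrightarrow> B (e 1) (e h) = e (h - 1)) \<and>
     (\<forall>h. 1 \<le> h \<and> h \<le> CARD('n) \<longrightarrow> B (e 2) (e h) = 0) \<and>
     (\<forall>h. 2 \<le> h \<and> h \<le> CARD('n) \<longrightarrow> B (e 3) (e h) = 0)"

definition is_min_ge4 :: "(nat \<Rightarrow> bool) \<Rightarrow> nat \<Rightarrow> bool" where
  "is_min_ge4 P z \<longleftrightarrow> 4 \<le> z \<and> P z \<and> (\<forall>k. 4 \<le> k \<and> k < z \<longrightarrow> \<not> P k)"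

text \<open>Associated triple (z1,z2,n) computed in an adapted basis e.\<close>
definition has_triple :: "'n::finite lie_bracket \<Rightarrow> (nat \<Rightarrow> complex^'n) \<Rightarrow> nat \<Rightarrow> nat \<Rightarrow> bool" where
  "has_triple B e z1 z2 \<longleftrightarrow>
     is_min_ge4 (\<lambda>k. k \<le> CARD('n) \<and> B (e k) (e CARD('n)) \<noteq> 0) z1 \<and>
     is_min_ge4 (\<lambda>k. k + 1 \<le> CARD('n) \<and> B (e k) (e (k + 1)) \<noteq> 0) z2"

text \<open>Hilbert polynomial evaluated at (t,s), truncated at N (terms with k>n or l>n vanish).\<close>
definition HP_trunc :: "'n::finite lie_bracket \<Rightarrow> nat \<Rightarrow> complex \<Rightarrow> complex \<Rightarrow> complex" where
  "HP_trunc B N t s = (\<Sum>k=1..N. \<Sum>l=1..N.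
      of_nat (vec.dim (lie_bracket_sub B (lcs B k) (lcs B l))) * t ^ k * s ^ l)"

definition HP0 :: "nat \<Rightarrow> complex \<Rightarrow> complex \<Rightarrow> complex" where
  "HP0 n t s = of_nat (n - 2) * t * s +
     (\<Sum>k=2..n-2. of_nat (n - k - 1) * (t ^ k * s + t * s ^ k))"

end

theory Submission
  imports Defs
begin

text \<open>
  In an adapted basis, \<open>C\<^sup>k\<close> is spanned by \<open>e 2, \<dots>, e (n + 1 - k)\<close> for \<open>k \<ge> 2\<close>: these
  vectors lie in \<open>C\<^sup>k\<close> because \<open>ad (e 1)\<close> lowers indices by one, and there are
  \<open>dim C\<^sup>k\<close> of them. As \<open>[C\<^sup>k, \<frak>g] = C\<^sup>k\<^sup>+\<^sup>1\<close>, the terms with \<open>k = 1\<close> or \<open>l = 1\<close> give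
  \<open>HP\<^sup>0\<close>. For \<open>k, l \<ge> 2\<close> the space \<open>[C\<^sup>k, C\<^sup>l]\<close> is spanned by the \<open>[e i, e j]\<close> with
  \<open>i \<le> n + 1 - k\<close> and \<open>j \<le> n + 1 - l\<close>. The triple \<open>(n - 2, n - 2, n)\<close> says that
  \<open>[e i, e (i + 1)]\<close> and \<open>[e i, e n]\<close> vanish for \<open>i < n - 2\<close>. Since \<open>ad (e 1)\<close> is a
  derivation, \<open>[e a, e b] = [e 1, [e (a + 1), e b]] - [e (a + 1), e (b - 1)]\<close>, and induction
  on \<open>b - a\<close> kills every bracket among \<open>e 2, \<dots>, e (n - 1)\<close> except
  \<open>\<plusminus>[e (n - 2), e (n - 1)] \<noteq> 0\<close>. That bracket occurs exactly for
  \<open>(k, l) \<in> {(2, 2), (2, 3), (3, 2)}\<close>, giving the three extra monomials.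
\<close>

section \<open>Elementary Lie algebra identities\<close>

context
  fixes B :: "'n::finite lie_bracket"
  assumes lie: "lie_algebra B"
begin

lemma lie_bracket_add_left: "B (x + y) z = B x z + B y z"
  using lie unfolding lie_algebra_def by blast

lemma lie_bracket_add_right: "B x (y + z) = B x y + B x z"
  using lie unfolding lie_algebra_def by blast

lemma lie_bracket_scale_left: "B (c *s x) y = c *s B x y"
  using lie unfolding lie_algebra_def by blast

lemma lie_bracket_scale_right: "B x (c *s y) = c *s B x y"
  using lie unfolding lie_algebra_def by blast

lemma lie_bracket_self: "B x x = 0"
  using lie unfolding lie_algebra_def by blast

lemma lie_bracket_jacobi: "B x (B y z) + B y (B z x) + B z (B x y) = 0"
  using lie unfolding lie_algebra_def by blast

lemma lie_bracket_zero_left: "B 0 y = 0"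
  using lie_bracket_add_left[of 0 0 y] by simp

lemma lie_bracket_zero_right: "B y 0 = 0"
  using lie_bracket_add_right[of y 0 0] by simp

lemma lie_bracket_antisym: "B x y = - B y x"
proof -
  have "0 = B (x + y) (x + y)"
    by (simp add: lie_bracket_self)
  also have "\<dots> = B x x + B y x + (B x y + B y y)"
    by (simp only: lie_bracket_add_left lie_bracket_add_right)
  finally have "B x y + B y x = 0"
    by (simp add: lie_bracket_self add.commute)
  then show ?thesis
    by (simp add: eq_neg_iff_add_eq_0)
qed

lemma lie_bracket_neg_right: "B x (- y) = - B x y"
  using lie_bracket_add_right[of x y "- y"]
  by (simp add: lie_bracket_zero_right eq_neg_iff_add_eq_0 add.commute)

lemma lie_bracket_leibniz: "B a (B x y) = B (B a x) y + B x (B a y)"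
proof -
  have "B a (B x y) + B x (B y a) + B y (B a x) = 0"
    by (rule lie_bracket_jacobi)
  moreover have "B x (B y a) = - B x (B a y)"
    by (metis lie_bracket_antisym lie_bracket_neg_right)
  moreover have "B y (B a x) = - B (B a x) y"
    by (rule lie_bracket_antisym)
  ultimately show ?thesis
    by (simp add: algebra_simps eq_neg_iff_add_eq_0)
qed

lemma lie_bracket_sub_commute: "lie_bracket_sub B U V = lie_bracket_sub B V U"
proof -
  have "lie_bracket_sub B U V \<subseteq> lie_bracket_sub B V U" for U V
    unfolding lie_bracket_sub_def
  proof (rule vec.span_minimal[OF _ vec.subspace_span], safe)
    fix u v assume "u \<in> U" "v \<in> V"
    then have "- B v u \<in> vec.span {B u v |u v. u \<in> V \<and> v \<in> U}"
      by (auto intro: vec.span_base vec.span_neg)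
    then show "B u v \<in> vec.span {B u v |u v. u \<in> V \<and> v \<in> U}"
      by (simp add: lie_bracket_antisym[of u v])
  qed
  then show ?thesis
    by blast
qed

lemma lie_bracket_sub_span:
  "lie_bracket_sub B (vec.span S) (vec.span T) = vec.span {B u v | u v. u \<in> S \<and> v \<in> T}"
proof (rule antisym)
  let ?W = "vec.span {B u v | u v. u \<in> S \<and> v \<in> T}"
  have left: "B u v \<in> ?W" if "u \<in> vec.span S" "v \<in> T" for u v
    using that(1)
  proof (induction rule: vec.span_induct)
    case base
    then show ?case
      unfolding vec.subspace_def
      by (auto simp: lie_bracket_zero_left lie_bracket_add_left lie_bracket_scale_left
          intro: vec.span_add vec.span_scale vec.span_zero)
  next
    case (step x)
    then show ?case
      using that(2) by (auto intro: vec.span_base)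
  qed
  have both: "B u v \<in> ?W" if "u \<in> vec.span S" "v \<in> vec.span T" for u v
    using that(2)
  proof (induction rule: vec.span_induct)
    case base
    then show ?case
      unfolding vec.subspace_def
      by (auto simp: lie_bracket_zero_right lie_bracket_add_right lie_bracket_scale_right
          intro: vec.span_add vec.span_scale vec.span_zero)
  next
    case (step x)
    then show ?case
      using left that(1) by blast
  qed
  show "lie_bracket_sub B (vec.span S) (vec.span T) \<subseteq> ?W"
    unfolding lie_bracket_sub_def using both by (intro vec.span_minimal) auto
  show "?W \<subseteq> lie_bracket_sub B (vec.span S) (vec.span T)"
    unfolding lie_bracket_sub_def by (intro vec.span_mono) (auto intro: vec.span_base)
qed

end

section \<open>The lower central series in an adapted basis\<close>

lemma adapted_basis_bracket_e1:
  "adapted_basis B e \<Longrightarrow> 3 \<le> h \<Longrightarrow> h \<le> CARD('n) \<Longrightarrow> B (e 1) (e h) = e (h - 1)"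
  for B :: "'n::finite lie_bracket"
  unfolding adapted_basis_def by blast

lemma adapted_basis_bracket_e2:
  "adapted_basis B e \<Longrightarrow> 1 \<le> h \<Longrightarrow> h \<le> CARD('n) \<Longrightarrow> B (e 2) (e h) = 0"
  for B :: "'n::finite lie_bracket"
  unfolding adapted_basis_def by blast

lemma adapted_basis_bracket_e3:
  "adapted_basis B e \<Longrightarrow> 2 \<le> h \<Longrightarrow> h \<le> CARD('n) \<Longrightarrow> B (e 3) (e h) = 0"
  for B :: "'n::finite lie_bracket"
  unfolding adapted_basis_def by blast

lemma adapted_basis_independent:
  fixes B :: "'n::finite lie_bracket"
  assumes "adapted_basis B e" "I \<subseteq> {1..CARD('n)}"
  shows "vec.independent (e ` I)" "card (e ` I) = card I"
  using assms unfolding adapted_basis_def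
  by (meson image_mono vec.independent_mono, meson card_image inj_on_subset)

lemma filiform_lie_algebra: "filiform B \<Longrightarrow> lie_algebra B"
  unfolding filiform_def by blast

lemma adapted_basis_mem_lcs:
  fixes B :: "'n::finite lie_bracket"
  assumes lie: "lie_algebra B" and adapted: "adapted_basis B e"
  shows "2 \<le> j \<Longrightarrow> j + m \<le> CARD('n) \<Longrightarrow> e j \<in> lcs B (Suc m)"
proof (induction m arbitrary: j)
  case 0
  then show ?case
    by simp
next
  case (Suc m)
  have "e j = - B (e (j + 1)) (e 1)"
    using adapted_basis_bracket_e1[OF adapted, of "j + 1"] lie_bracket_antisym[OF lie, of "e 1"]
      Suc.prems by simp
  moreover have "e (j + 1) \<in> lcs B (Suc m)"
    using Suc by simp
  then have "B (e (j + 1)) (e 1) \<in> lcs B (Suc (Suc m))"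
    unfolding lcs.simps lie_bracket_sub_def by (blast intro: vec.span_base)
  ultimately show ?case
    by (simp add: lie_bracket_sub_def vec.span_neg)
qed

lemma filiform_lcs_eq_span_le:
  fixes B :: "'n::finite lie_bracket"
  assumes fil: "filiform B" and adapted: "adapted_basis B e" and k: "2 \<le> k" "k \<le> CARD('n)"
  shows "lcs B k = vec.span (e ` {2..CARD('n)+1-k})"
proof -
  let ?E = "e ` {2..CARD('n)+1-k}"
  obtain m where m: "k = Suc (Suc m)"
    using k(1) by (metis add_2_eq_Suc le_Suc_ex)
  have "e j \<in> lcs B k" if "j \<in> {2..CARD('n)+1-k}" for j
  proof -
    have "2 \<le> j" "j + (k - 1) \<le> CARD('n)"
      using that k by auto
    then show ?thesis
      using adapted_basis_mem_lcs[OF filiform_lie_algebra[OF fil] adapted] m by fastforce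
  qed
  then have "?E \<subseteq> lcs B k"
    by blast
  moreover have "vec.subspace (lcs B k)"
    using m by (simp add: lie_bracket_sub_def vec.subspace_span)
  moreover have "{2..CARD('n)+1-k} \<subseteq> {1..CARD('n)}"
    using k by auto
  then have "vec.independent ?E" "card ?E = CARD('n) - k"
    using adapted_basis_independent[OF adapted] k by auto
  moreover have "vec.dim (lcs B k) = CARD('n) - k"
    using fil k unfolding filiform_def by blast
  ultimately show ?thesis
    by (metis order_refl subset_antisym vec.card_ge_dim_independent vec.span_minimal)
qed

lemma filiform_lcs_eq_span:
  fixes B :: "'n::finite lie_bracket"
  assumes fil: "filiform B" and adapted: "adapted_basis B e" and k: "2 \<le> k"
  shows "lcs B k = vec.span (e ` {2..CARD('n)+1-k})"
  using k
proof (induction k rule: nat_induct_at_least)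
  case base
  then show ?case
    using filiform_lcs_eq_span_le[OF fil adapted] fil unfolding filiform_def by blast
next
  case (Suc k)
  show ?case
  proof (cases "Suc k \<le> CARD('n)")
    case True
    then show ?thesis
      using filiform_lcs_eq_span_le[OF fil adapted] Suc.hyps by simp
  next
    case False
    then have empty: "{2..CARD('n)+1-k} = {}" "{2..CARD('n)+1-Suc k} = {}"
      by auto
    obtain m where m: "k = Suc m"
      using Suc.hyps by (cases k) auto
    have "lcs B (Suc k) = lie_bracket_sub B (vec.span {}) (vec.span UNIV)"
      using Suc.IH m empty by simp
    also have "\<dots> = vec.span {}"
      unfolding lie_bracket_sub_span[OF filiform_lie_algebra[OF fil]] by simp
    finally show ?thesis
      using empty by simp
  qed
qed

lemma filiform_dim_lcs:
  fixes B :: "'n::finite lie_bracket"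
  assumes "filiform B" "adapted_basis B e" "2 \<le> k"
  shows "vec.dim (lcs B k) = CARD('n) - k"
proof -
  have "{2..CARD('n)+1-k} \<subseteq> {1..CARD('n)}"
    using assms(3) by auto
  then have "vec.independent (e ` {2..CARD('n)+1-k})" "card (e ` {2..CARD('n)+1-k}) = CARD('n) - k"
    using adapted_basis_independent[OF assms(2)] assms(3) by auto
  then show ?thesis
    unfolding filiform_lcs_eq_span[OF assms] by (metis vec.dim_span_eq_card_independent)
qed

section \<open>Brackets of basis vectors\<close>

lemma adapted_basis_bracket_shift:
  fixes B :: "'n::finite lie_bracket"
  assumes lie: "lie_algebra B" and adapted: "adapted_basis B e"
    and "2 \<le> a" "a < CARD('n)" "3 \<le> b" "b \<le> CARD('n)"
  shows "B (e a) (e b) = B (e 1) (B (e (a + 1)) (e b)) - B (e (a + 1)) (e (b - 1))"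
proof -
  have "B (e 1) (B (e (a + 1)) (e b)) = B (B (e 1) (e (a + 1))) (e b) + B (e (a + 1)) (B (e 1) (e b))"
    by (rule lie_bracket_leibniz[OF lie])
  also have "\<dots> = B (e a) (e b) + B (e (a + 1)) (e (b - 1))"
    using adapted_basis_bracket_e1[OF adapted, of "a + 1"] adapted_basis_bracket_e1[OF adapted, of b]
      assms by simp
  finally show ?thesis
    by simp
qed

lemma has_triple_bounds:
  fixes B :: "'n::finite lie_bracket"
  assumes "has_triple B e z1 z2"
  shows "4 \<le> z1" "z1 \<le> CARD('n)" "4 \<le> z2" "z2 < CARD('n)"
  using assms unfolding has_triple_def is_min_ge4_def by auto

lemma has_triple_bracket_nonzero: "has_triple B e z1 z2 \<Longrightarrow> B (e z2) (e (z2 + 1)) \<noteq> 0"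
  unfolding has_triple_def is_min_ge4_def by blast

lemma has_triple_bracket_last_zero:
  fixes B :: "'n::finite lie_bracket"
  assumes adapted: "adapted_basis B e" and triple: "has_triple B e z1 z2"
    and k: "2 \<le> k" "k < z1"
  shows "B (e k) (e CARD('n)) = 0"
proof -
  have k_le: "k \<le> CARD('n)"
    using has_triple_bounds(2)[OF triple] k by linarith
  consider "k = 2" | "k = 3" | "4 \<le> k"
    using k by linarith
  then show ?thesis
  proof cases
    case 3
    then show ?thesis
      using triple k k_le unfolding has_triple_def is_min_ge4_def by blast
  qed (use adapted_basis_bracket_e2[OF adapted] adapted_basis_bracket_e3[OF adapted] k_le k in simp_all)
qed

lemma has_triple_bracket_consecutive_zero:
  fixes B :: "'n::finite lie_bracket"
  assumes adapted: "adapted_basis B e" and triple: "has_triple B e z1 z2"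
    and k: "2 \<le> k" "k < z2"
  shows "B (e k) (e (k + 1)) = 0"
proof -
  have k_le: "k + 1 \<le> CARD('n)"
    using has_triple_bounds(4)[OF triple] k by linarith
  consider "k = 2" | "k = 3" | "4 \<le> k"
    using k by linarith
  then show ?thesis
  proof cases
    case 3
    then show ?thesis
      using triple k k_le unfolding has_triple_def is_min_ge4_def by blast
  qed (use adapted_basis_bracket_e2[OF adapted] adapted_basis_bracket_e3[OF adapted] k_le in simp_all)
qed

lemma has_triple_bracket_second_last_zero:
  fixes B :: "'n::finite lie_bracket"
  assumes lie: "lie_algebra B" and adapted: "adapted_basis B e" and triple: "has_triple B e z1 z2"
    and k: "2 \<le> k" "k < z1"
  shows "B (e k) (e (CARD('n) - 1)) = 0"
proof (cases "k = 2")
  case True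
  then show ?thesis
    using adapted_basis_bracket_e2[OF adapted] has_triple_bounds[OF triple] by simp
next
  case False
  have "B (e (k - 1)) (e CARD('n)) =
      B (e 1) (B (e k) (e CARD('n))) - B (e k) (e (CARD('n) - 1))"
    using adapted_basis_bracket_shift[OF lie adapted, of "k - 1" "CARD('n)"] False k
      has_triple_bounds[OF triple] by simp
  then show ?thesis
    using has_triple_bracket_last_zero[OF adapted triple] False k
    by (simp add: lie_bracket_zero_right[OF lie])
qed

lemma adapted_basis_brackets_vanish_upto:
  fixes B :: "'n::finite lie_bracket"
  assumes lie: "lie_algebra B" and adapted: "adapted_basis B e" and z: "z \<le> CARD('n)"
    and consecutive: "\<And>k. 2 \<le> k \<Longrightarrow> k < z \<Longrightarrow> B (e k) (e (k + 1)) = 0"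
    and ij: "2 \<le> i" "2 \<le> j" "i \<le> z" "j \<le> z"
  shows "B (e i) (e j) = 0"
proof -
  have upper: "B (e i) (e (i + d)) = 0" if "2 \<le> i" "i + d \<le> z" for i d
    using that
  proof (induction d arbitrary: i rule: less_induct)
    case (less d)
    consider "d = 0" | "d = 1" | "2 \<le> d"
      by linarith
    then show ?case
    proof cases
      case 1
      then show ?thesis
        by (simp add: lie_bracket_self[OF lie])
    next
      case 2
      then show ?thesis
        using consecutive less.prems by simp
    next
      case 3
      have "B (e (i + 1)) (e (i + d)) = 0"
        using less.IH[of "d - 1" "i + 1"] less.prems 3 by simp
      moreover have "B (e (i + 1)) (e (i + 1 + (d - 2))) = 0"
        using less.IH[of "d - 2" "i + 1"] less.prems 3 by simp
      moreover have "i + 1 + (d - 2) = i + d - 1"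
        using 3 by simp
      ultimately show ?thesis
        using adapted_basis_bracket_shift[OF lie adapted, of i "i + d"] less.prems 3 z
        by (simp add: lie_bracket_zero_right[OF lie])
    qed
  qed
  show ?thesis
  proof (cases "i \<le> j")
    case True
    then show ?thesis
      using upper[of i "j - i"] ij by simp
  next
    case False
    then show ?thesis
      using upper[of j "i - j"] ij lie_bracket_antisym[OF lie, of "e i" "e j"] by simp
  qed
qed

lemma bracket_vanishes_off_top_pair:
  fixes B :: "'n::finite lie_bracket"
  assumes lie: "lie_algebra B" and adapted: "adapted_basis B e"
    and triple: "has_triple B e (CARD('n) - 2) (CARD('n) - 2)"
    and ij: "2 \<le> i" "2 \<le> j" "i < CARD('n)" "j < CARD('n)"
    and off: "(i, j) \<notin> {(CARD('n) - 2, CARD('n) - 1), (CARD('n) - 1, CARD('n) - 2)}"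
  shows "B (e i) (e j) = 0"
proof -
  have "i \<le> CARD('n) - 2 \<or> i = CARD('n) - 1" "j \<le> CARD('n) - 2 \<or> j = CARD('n) - 1"
    using ij by linarith+
  moreover have "\<not> (i = CARD('n) - 2 \<and> j = CARD('n) - 1)"
    and "\<not> (i = CARD('n) - 1 \<and> j = CARD('n) - 2)"
    using off by auto
  ultimately consider "i \<le> CARD('n) - 2" "j \<le> CARD('n) - 2" | "i = CARD('n) - 1" "j = CARD('n) - 1"
    | "i = CARD('n) - 1" "j < CARD('n) - 2" | "i < CARD('n) - 2" "j = CARD('n) - 1"
    by linarith
  then show ?thesis
  proof cases
    case 1
    have "B (e k) (e (k + 1)) = 0" if "2 \<le> k" "k < CARD('n) - 2" for k
      using has_triple_bracket_consecutive_zero[OF adapted triple that] .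
    then show ?thesis
      using adapted_basis_brackets_vanish_upto[OF lie adapted, of "CARD('n) - 2"] 1 ij by simp
  next
    case 2
    then show ?thesis
      by (simp add: lie_bracket_self[OF lie])
  next
    case 3
    then show ?thesis
      using has_triple_bracket_second_last_zero[OF lie adapted triple, of j] ij
        lie_bracket_antisym[OF lie, of "e i" "e j"] by simp
  next
    case 4
    then show ?thesis
      using has_triple_bracket_second_last_zero[OF lie adapted triple, of i] ij by simp
  qed
qed

section \<open>Dimensions of the brackets of the lower central series\<close>

lemma lie_bracket_sub_lcs_UNIV: "1 \<le> k \<Longrightarrow> lie_bracket_sub B (lcs B k) UNIV = lcs B (Suc k)"
  by (cases k) auto

lemma filiform_dim_bracket_lcs_1:
  fixes B :: "'n::finite lie_bracket"
  assumes fil: "filiform B" and adapted: "adapted_basis B e" and k: "1 \<le> k"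
  shows "vec.dim (lie_bracket_sub B (lcs B k) (lcs B 1)) = CARD('n) - (k + 1)"
    and "vec.dim (lie_bracket_sub B (lcs B 1) (lcs B k)) = CARD('n) - (k + 1)"
  using filiform_dim_lcs[OF fil adapted, of "Suc k"] k
  by (simp_all add: lie_bracket_sub_lcs_UNIV
      lie_bracket_sub_commute[OF filiform_lie_algebra[OF fil], of UNIV])

lemma filiform_bracket_lcs_lcs_eq_span:
  fixes B :: "'n::finite lie_bracket"
  assumes fil: "filiform B" and adapted: "adapted_basis B e" and kl: "2 \<le> k" "2 \<le> l"
  shows "lie_bracket_sub B (lcs B k) (lcs B l) =
    vec.span {B (e i) (e j) | i j. i \<in> {2..CARD('n)+1-k} \<and> j \<in> {2..CARD('n)+1-l}}"
proof -
  have "{B u v | u v. u \<in> e ` {2..CARD('n)+1-k} \<and> v \<in> e ` {2..CARD('n)+1-l}} =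
      {B (e i) (e j) | i j. i \<in> {2..CARD('n)+1-k} \<and> j \<in> {2..CARD('n)+1-l}}"
    by blast
  then show ?thesis
    unfolding filiform_lcs_eq_span[OF fil adapted kl(1)] filiform_lcs_eq_span[OF fil adapted kl(2)]
      lie_bracket_sub_span[OF filiform_lie_algebra[OF fil]] by simp
qed

lemma bracket_lcs_lcs_eq_span_top_pair:
  fixes B :: "'n::finite lie_bracket"
  assumes fil: "filiform B" and adapted: "adapted_basis B e"
    and triple: "has_triple B e (CARD('n) - 2) (CARD('n) - 2)"
    and kl: "(k = 2 \<and> 2 \<le> l \<and> l \<le> 3) \<or> (k = 3 \<and> l = 2)"
  shows "lie_bracket_sub B (lcs B k) (lcs B l) = vec.span {B (e (CARD('n) - 2)) (e (CARD('n) - 1))}"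
proof -
  have lie: "lie_algebra B"
    using filiform_lie_algebra[OF fil] .
  note bounds = has_triple_bounds[OF triple]
  define w where "w = B (e (CARD('n) - 2)) (e (CARD('n) - 1))"
  define T where "T = {B (e i) (e j) | i j. i \<in> {2..CARD('n)+1-k} \<and> j \<in> {2..CARD('n)+1-l}}"
  have "B (e i) (e j) \<in> vec.span {w}" if "2 \<le> i" "2 \<le> j" "i < CARD('n)" "j < CARD('n)" for i j
  proof (cases "(i, j) \<in> {(CARD('n) - 2, CARD('n) - 1), (CARD('n) - 1, CARD('n) - 2)}")
    case True
    then show ?thesis
      using lie_bracket_antisym[OF lie, of "e i" "e j"]
      by (auto simp: w_def vec.span_base vec.span_neg)
  next
    case False
    then show ?thesis
      using bracket_vanishes_off_top_pair[OF lie adapted triple that] by (simp add: vec.span_zero)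
  qed
  then have "T \<subseteq> vec.span {w}"
    unfolding T_def using kl bounds by auto
  moreover have "w \<in> vec.span T"
  proof (cases "k = 2")
    case True
    then have "B (e (CARD('n) - 1)) (e (CARD('n) - 2)) \<in> T"
      unfolding T_def using kl bounds by fastforce
    then have "- w \<in> vec.span T"
      using lie_bracket_antisym[OF lie, of "e (CARD('n) - 1)"] by (simp add: w_def vec.span_base)
    then show ?thesis
      by (metis minus_minus vec.span_neg)
  next
    case False
    then have "w \<in> T"
      unfolding T_def w_def using kl bounds by fastforce
    then show ?thesis
      by (rule vec.span_base)
  qed
  moreover have "lie_bracket_sub B (lcs B k) (lcs B l) = vec.span T"
    unfolding T_def using kl by (intro filiform_bracket_lcs_lcs_eq_span[OF fil adapted]) auto
  ultimately show ?thesis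
    by (simp add: vec.span_eq w_def)
qed

lemma bracket_lcs_lcs_eq_zero:
  fixes B :: "'n::finite lie_bracket"
  assumes fil: "filiform B" and adapted: "adapted_basis B e"
    and triple: "has_triple B e (CARD('n) - 2) (CARD('n) - 2)"
    and kl: "2 \<le> k" "2 \<le> l" "\<not> ((k = 2 \<and> l \<le> 3) \<or> (k = 3 \<and> l = 2))"
  shows "lie_bracket_sub B (lcs B k) (lcs B l) = {0}"
proof -
  let ?T = "{B (e i) (e j) | i j. i \<in> {2..CARD('n)+1-k} \<and> j \<in> {2..CARD('n)+1-l}}"
  have "B (e i) (e j) = 0" if "i \<in> {2..CARD('n)+1-k}" "j \<in> {2..CARD('n)+1-l}" for i j
  proof -
    have ij: "2 \<le> i" "2 \<le> j" "i < CARD('n)" "j < CARD('n)"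
      using that kl by auto
    have "(i, j) \<notin> {(CARD('n) - 2, CARD('n) - 1), (CARD('n) - 1, CARD('n) - 2)}"
      using that kl has_triple_bounds[OF triple] by auto
    then show ?thesis
      by (rule bracket_vanishes_off_top_pair[OF filiform_lie_algebra[OF fil] adapted triple ij])
  qed
  then have "?T \<subseteq> {0}"
    by blast
  then have "vec.span ?T = {0}"
    using vec.span_mono[of ?T "{0}"] by (auto simp: vec.span_zero)
  then show ?thesis
    unfolding filiform_bracket_lcs_lcs_eq_span[OF fil adapted kl(1,2)] .
qed

lemma filiform_dim_bracket_lcs_lcs:
  fixes B :: "'n::finite lie_bracket"
  assumes fil: "filiform B" and adapted: "adapted_basis B e"
    and triple: "has_triple B e (CARD('n) - 2) (CARD('n) - 2)"
    and kl: "2 \<le> k" "2 \<le> l"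
  shows "vec.dim (lie_bracket_sub B (lcs B k) (lcs B l)) =
    (if (k = 2 \<and> l \<le> 3) \<or> (k = 3 \<and> l = 2) then 1 else 0)"
proof (cases "(k = 2 \<and> l \<le> 3) \<or> (k = 3 \<and> l = 2)")
  case True
  have "CARD('n) - 2 + 1 = CARD('n) - 1"
    using has_triple_bounds[OF triple] by linarith
  then have "B (e (CARD('n) - 2)) (e (CARD('n) - 1)) \<noteq> 0"
    using has_triple_bracket_nonzero[OF triple] by metis
  then show ?thesis
    using bracket_lcs_lcs_eq_span_top_pair[OF fil adapted triple] True kl
    by (simp add: vec.dim_span_eq_card_independent vec.independent_insert)
next
  case False
  then show ?thesis
    using bracket_lcs_lcs_eq_zero[OF fil adapted triple kl False] by (simp add: vec.dim_eq_0)
qed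

lemma sum_square_split_first:
  fixes F :: "nat \<Rightarrow> nat \<Rightarrow> 'a::comm_monoid_add"
  assumes "1 \<le> N"
  shows "(\<Sum>k=1..N. \<Sum>l=1..N. F k l) =
    F 1 1 + (\<Sum>l=2..N. F 1 l) + (\<Sum>k=2..N. F k 1) + (\<Sum>k=2..N. \<Sum>l=2..N. F k l)"
proof -
  have split: "(\<Sum>i=1..N. g i) = g 1 + (\<Sum>i=2..N. g i)" for g :: "nat \<Rightarrow> 'a"
    using sum.atLeast_Suc_atMost[OF assms, of g] by (simp add: numeral_2_eq_2)
  show ?thesis
    unfolding split sum.distrib by (simp only: ac_simps)
qed

lemma Hilbert_sum_eq_HP0_plus:
  fixes D :: "nat \<Rightarrow> nat \<Rightarrow> nat" and t s :: complex
  assumes n: "4 \<le> n" "n \<le> N"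
    and first_row: "\<And>l. 1 \<le> l \<Longrightarrow> D 1 l = n - (l + 1)"
    and first_column: "\<And>k. 1 \<le> k \<Longrightarrow> D k 1 = n - (k + 1)"
    and inner: "\<And>k l. 2 \<le> k \<Longrightarrow> 2 \<le> l \<Longrightarrow>
      D k l = (if (k = 2 \<and> l \<le> 3) \<or> (k = 3 \<and> l = 2) then 1 else 0)"
  shows "(\<Sum>k=1..N. \<Sum>l=1..N. of_nat (D k l) * t ^ k * s ^ l) =
    HP0 n t s + t^2 * s^3 + t^3 * s^2 + t^2 * s^2"
proof -
  define F where "F k l = of_nat (D k l) * t ^ k * s ^ l" for k l
  have truncate: "(\<Sum>i=2..N. of_nat (n - (i + 1)) * g i) = (\<Sum>i=2..n-2. of_nat (n - (i + 1)) * g i)"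
    for g :: "nat \<Rightarrow> complex"
    using n by (intro sum.mono_neutral_right) auto
  have "F 1 l = of_nat (n - (l + 1)) * (t * s ^ l)" if "1 \<le> l" for l
    using first_row[OF that] unfolding F_def by (simp add: mult.assoc)
  then have "(\<Sum>l=2..N. F 1 l) = (\<Sum>l=2..N. of_nat (n - (l + 1)) * (t * s ^ l))"
    by (intro sum.cong) simp_all
  then have row: "(\<Sum>l=2..N. F 1 l) = (\<Sum>l=2..n-2. of_nat (n - l - 1) * (t * s ^ l))"
    using truncate by simp
  have "F k 1 = of_nat (n - (k + 1)) * (t ^ k * s)" if "1 \<le> k" for k
    using first_column[OF that] unfolding F_def by (simp add: mult.assoc)
  then have "(\<Sum>k=2..N. F k 1) = (\<Sum>k=2..N. of_nat (n - (k + 1)) * (t ^ k * s))"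
    by (intro sum.cong) simp_all
  then have column: "(\<Sum>k=2..N. F k 1) = (\<Sum>k=2..n-2. of_nat (n - k - 1) * (t ^ k * s))"
    using truncate by simp
  have "(\<Sum>l=2..N. F k l) = (\<Sum>l\<in>{2, 3}. F k l)" if "2 \<le> k" for k
    using n that by (intro sum.mono_neutral_right) (auto simp: F_def inner)
  then have "(\<Sum>k=2..N. \<Sum>l=2..N. F k l) = (\<Sum>k=2..N. \<Sum>l\<in>{2, 3}. F k l)"
    by simp
  also have "\<dots> = (\<Sum>k\<in>{2, 3}. \<Sum>l\<in>{2, 3}. F k l)"
    using n by (intro sum.mono_neutral_right) (auto simp: F_def inner)
  finally have rest: "(\<Sum>k=2..N. \<Sum>l=2..N. F k l) = t^2 * s^3 + t^3 * s^2 + t^2 * s^2"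
    by (simp add: F_def inner)
  have "F 1 1 = of_nat (n - 2) * t * s"
    using first_row[of 1] by (simp add: F_def numeral_2_eq_2)
  then have "(\<Sum>k=1..N. \<Sum>l=1..N. F k l) =
      of_nat (n - 2) * t * s + (\<Sum>l=2..n-2. of_nat (n - l - 1) * (t * s ^ l))
      + (\<Sum>k=2..n-2. of_nat (n - k - 1) * (t ^ k * s)) + (t^2 * s^3 + t^3 * s^2 + t^2 * s^2)"
    using sum_square_split_first[of N F] n unfolding row column rest by simp
  also have "\<dots> = HP0 n t s + t^2 * s^3 + t^3 * s^2 + t^2 * s^2"
    unfolding HP0_def by (simp add: distrib_left sum.distrib ac_simps)
  finally show ?thesis
    unfolding F_def .
qed

theorem mainTheorem11:
  fixes B :: "'n::finite lie_bracket"
  assumes "CARD('n) \<ge> 6"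
    and "filiform B"
    and "adapted_basis B e"
    and "has_triple B e (CARD('n) - 2) (CARD('n) - 2)"
  shows "\<forall>N \<ge> CARD('n). \<forall>t s. HP_trunc B N t s =
           HP0 (CARD('n)) t s + t^2 * s^3 + t^3 * s^2 + t^2 * s^2"
proof (intro allI impI)
  fix N :: nat and t s :: complex
  assume "CARD('n) \<le> N"
  then show "HP_trunc B N t s = HP0 (CARD('n)) t s + t^2 * s^3 + t^3 * s^2 + t^2 * s^2"
    unfolding HP_trunc_def
    using assms(1) filiform_dim_bracket_lcs_1[OF assms(2,3)]
      filiform_dim_bracket_lcs_lcs[OF assms(2-4)]
    by (intro Hilbert_sum_eq_HP0_plus) simp_all
qed

end
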